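(* Let $B \in \mathbb{R}^{r \times n}$ and $S\subseteq \mathbb{R}^n$, and let $S_B = \{ x^B - y^B \mid x,y \in \mathbb{R}^n_+,\ x - y \in S^* \}\subseteq\mathbb{R}^r$. Then $\sigma(S_B) = \sigma(B(\Sigma(S^* )))$.
   Context: $\mathbb{R}_+$ denotes the strictly positive reals. For $x\in\mathbb{R}^n_+$, $x^B\in\mathbb{R}^r_+$ has components $(x^B)_j=\prod_{i=1}^n x_i^{b_{ji}}$ (real exponents). $S^*=S\setminus\{0\}$. For $x\in\mathbb{R}^k$, $\sigma(x)$ is the componentwise sign vector in $\{-,0,+\}^k$; for $T\subseteq\mathbb{R}^k$, $\sigma(T)=\{\sigma(x)\mid x\in T\}$ and $\Sigma(T)=\sigma^{-1}(\sigma(T))$. $B(T)=\{Bx\mid x\in T\}$. *)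

theory Defs
  imports "HOL-Analysis.Analysis"
begin

definition mon_pow :: "real^'n \<Rightarrow> real^'n^'r \<Rightarrow> real^'r" where
  "mon_pow x B = (\<chi> j. \<Prod>i\<in>UNIV. (x $ i) powr (B $ j $ i))"

text \<open>Componentwise sign vector; the signs -,0,+ are encoded as -1,0,1.\<close>
definition sign_vec :: "real^'k \<Rightarrow> real^'k" where
  "sign_vec x = (\<chi> i. sgn (x $ i))"

definition sign_set :: "(real^'k) set \<Rightarrow> (real^'k) set" where
  "sign_set T = sign_vec ` T"

definition Sign_closure :: "(real^'k) set \<Rightarrow> (real^'k) set" where
  "Sign_closure T = sign_vec -` (sign_set T)"

definition pos_vecs :: "(real^'k) set" where
  "pos_vecs = {x. \<forall>i. 0 < x $ i}"

definition S_B :: "real^'n^'r \<Rightarrow> (real^'n) set \<Rightarrow> (real^'r) set" where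
  "S_B B S = {mon_pow x B - mon_pow y B | x y. x \<in> pos_vecs \<and> y \<in> pos_vecs \<and> x - y \<in> S - {0}}"

end

theory Submission
  imports Defs
begin

text \<open>On positive vectors the componentwise logarithm turns the monomial map into the linear
  map \<open>B\<close>: \<open>x\<^sup>B = exp (B ln x)\<close>. Since \<open>exp\<close> and \<open>ln\<close> are strictly increasing, the signs of
  \<open>x\<^sup>B - y\<^sup>B\<close> are those of \<open>B (ln x - ln y)\<close>, and the signs of \<open>ln x - ln y\<close> are those of \<open>x - y\<close>.
  Conversely, every \<open>v\<close> sign-equivalent to a given \<open>s\<close> arises as \<open>ln x - ln y\<close> with \<open>x - y = s\<close>:
  componentwise take \<open>y = s / (e\<^sup>v - 1)\<close> and \<open>x = e\<^sup>v y\<close>. Hence the differences of logarithms over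
  pairs with \<open>x - y \<in> S\<^sup>*\<close> form exactly \<open>\<Sigma>(S\<^sup>*)\<close>.\<close>

definition ln_vec :: "real^'n \<Rightarrow> real^'n" where
  "ln_vec x = (\<chi> i. ln (x $ i))"

lemma sign_vec_eq_iff: "sign_vec v = sign_vec w \<longleftrightarrow> (\<forall>i. sgn (v $ i) = sgn (w $ i))"
  by (simp add: sign_vec_def vec_eq_iff)

lemma Sign_closure_eq: "Sign_closure T = {v. \<exists>s\<in>T. sign_vec v = sign_vec s}"
  by (auto simp: Sign_closure_def sign_set_def)

lemma sgn_exp_diff: "sgn (exp a - exp b) = sgn (a - b :: real)"
  by (cases a b rule: linorder_cases) (auto simp: sgn_if)

lemma sgn_ln_diff: "0 < a \<Longrightarrow> 0 < b \<Longrightarrow> sgn (ln a - ln b) = sgn (a - b :: real)"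
  by (cases a b rule: linorder_cases) (auto simp: sgn_if)

lemma mon_pow_eq_exp:
  assumes "x \<in> pos_vecs"
  shows "mon_pow x B $ j = exp ((B *v ln_vec x) $ j)"
proof -
  have "mon_pow x B $ j = (\<Prod>i\<in>UNIV. exp (B $ j $ i * ln (x $ i)))"
    using assms unfolding mon_pow_def pos_vecs_def powr_def
    by (auto intro!: prod.cong simp: less_imp_neq[symmetric])
  also have "\<dots> = exp (\<Sum>i\<in>UNIV. B $ j $ i * ln (x $ i))"
    by (simp add: exp_sum)
  finally show ?thesis by (simp add: matrix_vector_mult_def ln_vec_def)
qed

lemma sign_vec_mon_pow_diff:
  assumes "x \<in> pos_vecs" "y \<in> pos_vecs"
  shows "sign_vec (mon_pow x B - mon_pow y B) = sign_vec (B *v (ln_vec x - ln_vec y))"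
  using assms
  by (simp add: sign_vec_eq_iff mon_pow_eq_exp sgn_exp_diff matrix_vector_mult_diff_distrib)

lemma sign_vec_ln_vec_diff:
  assumes "x \<in> pos_vecs" "y \<in> pos_vecs"
  shows "sign_vec (ln_vec x - ln_vec y) = sign_vec (x - y)"
  using assms by (simp add: sign_vec_eq_iff ln_vec_def pos_vecs_def sgn_ln_diff)

lemma ln_diff_realizes_sign:
  fixes v s :: real
  assumes "sgn v = sgn s"
  obtains a b where "0 < a" "0 < b" "a - b = s" "ln a - ln b = v"
proof (cases "v = 0")
  case True
  with assms have "s = 0" by (simp add: sgn_0_0)
  with True that[of 1 1] show thesis by simp
next
  case False
  define b where "b = s / (exp v - 1)"
  have "sgn (exp v - 1) = sgn s"
    using sgn_exp_diff[of v 0] assms by simp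
  with False have "0 < b"
    by (simp add: b_def sgn_if divide_pos_pos divide_neg_neg split: if_splits)
  moreover have "exp v * b - b = s"
  proof -
    have "exp v * b - b = (exp v - 1) * b" by (simp add: algebra_simps)
    with False show ?thesis by (simp add: b_def)
  qed
  moreover have "ln (exp v * b) - ln b = v"
    using \<open>0 < b\<close> by (simp add: ln_mult)
  ultimately show thesis
    using that[of "exp v * b" b] by simp
qed

lemma ln_vec_diffs_eq_Sign_closure:
  "{ln_vec x - ln_vec y | x y. x \<in> pos_vecs \<and> y \<in> pos_vecs \<and> x - y \<in> T} = Sign_closure T"
proof
  show "{ln_vec x - ln_vec y | x y. x \<in> pos_vecs \<and> y \<in> pos_vecs \<and> x - y \<in> T} \<subseteq> Sign_closure T"
    using sign_vec_ln_vec_diff by (fastforce simp: Sign_closure_eq)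
next
  show "Sign_closure T \<subseteq> {ln_vec x - ln_vec y | x y. x \<in> pos_vecs \<and> y \<in> pos_vecs \<and> x - y \<in> T}"
  proof
    fix v assume "v \<in> Sign_closure T"
    then obtain s where "s \<in> T" and "\<forall>i. sgn (v $ i) = sgn (s $ i)"
      by (auto simp: Sign_closure_eq sign_vec_eq_iff)
    then have "\<forall>i. \<exists>a b. 0 < a \<and> 0 < b \<and> a - b = s $ i \<and> ln a - ln b = v $ i"
      by (metis ln_diff_realizes_sign)
    then obtain a b where ab: "\<And>i. 0 < a i \<and> 0 < b i \<and> a i - b i = s $ i \<and> ln (a i) - ln (b i) = v $ i"
      by metis
    let ?x = "\<chi> i. a i" and ?y = "\<chi> i. b i"
    have "?x \<in> pos_vecs" "?y \<in> pos_vecs" "?x - ?y = s" "ln_vec ?x - ln_vec ?y = v"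
      using ab by (auto simp: pos_vecs_def vec_eq_iff ln_vec_def)
    with \<open>s \<in> T\<close> show "v \<in> {ln_vec x - ln_vec y | x y. x \<in> pos_vecs \<and> y \<in> pos_vecs \<and> x - y \<in> T}"
      by blast
  qed
qed

theorem mainTheorem6:
  fixes B :: "real^'n^'r" and S :: "(real^'n) set"
  shows "sign_set (S_B B S) = sign_set ((\<lambda>v. B *v v) ` Sign_closure (S - {0}))"
proof -
  let ?P = "{(x, y). x \<in> pos_vecs \<and> y \<in> pos_vecs \<and> x - y \<in> S - {0}}"
  have "sign_set (S_B B S) = (\<lambda>(x, y). sign_vec (mon_pow x B - mon_pow y B)) ` ?P"
    by (auto simp: sign_set_def S_B_def)
  also have "\<dots> = (\<lambda>(x, y). sign_vec (B *v (ln_vec x - ln_vec y))) ` ?P"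
    by (intro image_cong) (auto simp: sign_vec_mon_pow_diff)
  also have "\<dots> = sign_set ((\<lambda>v. B *v v) `
      {ln_vec x - ln_vec y | x y. x \<in> pos_vecs \<and> y \<in> pos_vecs \<and> x - y \<in> S - {0}})"
    by (auto simp: sign_set_def)
  finally show ?thesis
    by (simp only: ln_vec_diffs_eq_Sign_closure)
qed

end
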